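(* Let $\Omega$ be a bounded open subset of $\mathbb{R}^N$, fix $a>0$ and set $p=2(a+1)$. Define $g:\mathbb{R}\times\mathbb{C}\to\mathbb{C}$ by $g(\alpha,v)=|v|^\alpha v$ if $\alpha>0$ and $g(\alpha,v)=v$ if $\alpha\le 0$, and for $v\in L^p(\Omega)$ let $G(\alpha,v)(\cdot)=g(\alpha,v(\cdot))$. Define $\mathcal{H}:\mathbb{R}\times\mathbb{C}\times\mathbb{C}\to\mathbb{C}$ by $$\mathcal{H}(\alpha,v,u)=\begin{cases}|v|^\alpha u+\alpha|v|^{\alpha-2}v\,\mathrm{Re}(\bar v u) & \alpha>0,\ v\ne0,\\ 0 & \alpha>0,\ v=0,\\ u & \alpha\le 0.\end{cases}$$ Then $G$ is continuous from $(-\infty,a]\times L^p(\Omega)$ to $L^2(\Omega)$. Moreover, $G$ is Fréchet differentiable with respect to $v$ everywhere on $(-\infty,a]\times L^p(\Omega)$, and $\partial_vG(\alpha,v)=L_{\alpha,v}$, where $L_{\alpha,v}u=\mathcal{H}(\alpha,v(\cdot),u(\cdot))$, for all $\alpha\in(-\infty,a)$, $v\in L^p(\Omega)$ and $u\in L^p(\Omega)$.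
   Context: Lebesgue spaces $L^r(\Omega)$ consist of complex-valued functions and are regarded as real Banach spaces (so linearity and Fréchet differentiability are over $\mathbb{R}$); $\partial_vG(\alpha,v)$ is a bounded real-linear operator $L^p(\Omega)\to L^2(\Omega)$. *)

theory Defs
  imports "HOL-Analysis.Analysis"
begin

text \<open>Lebesgue spaces of complex-valued functions on a measurable set Omega of a
Euclidean space, represented by (representatives of) functions; the L^r seminorm
vanishes exactly on a.e.-zero functions, so statements are up to a.e. equality.\<close>

definition Lsp :: "real \<Rightarrow> ('n::euclidean_space) set \<Rightarrow> ('n \<Rightarrow> complex) set" where
  "Lsp r \<Omega> = {f. f \<in> borel_measurable (lebesgue_on \<Omega>) \<and>
                 integrable (lebesgue_on \<Omega>) (\<lambda>x. norm (f x) powr r)}"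

definition Lnorm :: "real \<Rightarrow> ('n::euclidean_space) set \<Rightarrow> ('n \<Rightarrow> complex) \<Rightarrow> real" where
  "Lnorm r \<Omega> f = (\<integral>x. norm (f x) powr r \<partial>lebesgue_on \<Omega>) powr (1 / r)"

definition gnl :: "real \<Rightarrow> complex \<Rightarrow> complex" where
  "gnl \<alpha> v = (if \<alpha> > 0 then complex_of_real (norm v powr \<alpha>) * v else v)"

definition Gop :: "real \<Rightarrow> ('n \<Rightarrow> complex) \<Rightarrow> ('n \<Rightarrow> complex)" where
  "Gop \<alpha> v = (\<lambda>x. gnl \<alpha> (v x))"

definition Hnl :: "real \<Rightarrow> complex \<Rightarrow> complex \<Rightarrow> complex" where
  "Hnl \<alpha> v u =
     (if \<alpha> > 0 then
        (if v \<noteq> 0 then complex_of_real (norm v powr \<alpha>) * u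
              + complex_of_real (\<alpha> * norm v powr (\<alpha> - 2) * Re (cnj v * u)) * v
         else 0)
      else u)"

definition Lop :: "real \<Rightarrow> ('n \<Rightarrow> complex) \<Rightarrow> ('n \<Rightarrow> complex) \<Rightarrow> ('n \<Rightarrow> complex)" where
  "Lop \<alpha> v u = (\<lambda>x. Hnl \<alpha> (v x) (u x))"

text \<open>T is a bounded real-linear operator L^p \<rightarrow> L^q (linearity up to a.e. equality,
i.e. in the quotient spaces).\<close>

definition bounded_real_linear_Lpq ::
  "real \<Rightarrow> real \<Rightarrow> ('n::euclidean_space) set \<Rightarrow> (('n \<Rightarrow> complex) \<Rightarrow> ('n \<Rightarrow> complex)) \<Rightarrow> bool" where
  "bounded_real_linear_Lpq p q \<Omega> T \<longleftrightarrow>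
     (\<forall>u\<in>Lsp p \<Omega>. T u \<in> Lsp q \<Omega>) \<and>
     (\<forall>u\<in>Lsp p \<Omega>. \<forall>w\<in>Lsp p \<Omega>. Lnorm q \<Omega> (\<lambda>x. T (\<lambda>y. u y + w y) x - T u x - T w x) = 0) \<and>
     (\<forall>c::real. \<forall>u\<in>Lsp p \<Omega>. Lnorm q \<Omega> (\<lambda>x. T (\<lambda>y. complex_of_real c * u y) x - complex_of_real c * T u x) = 0) \<and>
     (\<exists>K. \<forall>u\<in>Lsp p \<Omega>. Lnorm q \<Omega> (T u) \<le> K * Lnorm p \<Omega> u)"

definition has_Frechet_deriv_Lpq ::
  "real \<Rightarrow> real \<Rightarrow> ('n::euclidean_space) set \<Rightarrow> (('n \<Rightarrow> complex) \<Rightarrow> ('n \<Rightarrow> complex))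
     \<Rightarrow> ('n \<Rightarrow> complex) \<Rightarrow> (('n \<Rightarrow> complex) \<Rightarrow> ('n \<Rightarrow> complex)) \<Rightarrow> bool" where
  "has_Frechet_deriv_Lpq p q \<Omega> F v T \<longleftrightarrow>
     bounded_real_linear_Lpq p q \<Omega> T \<and>
     (\<forall>\<epsilon>>0. \<exists>\<delta>>0. \<forall>h\<in>Lsp p \<Omega>. Lnorm p \<Omega> h < \<delta> \<longrightarrow>
        Lnorm q \<Omega> (\<lambda>x. F (\<lambda>y. v y + h y) x - F v x - T h x) \<le> \<epsilon> * Lnorm p \<Omega> h)"

end

theory Submission
  imports Defs
begin

text \<open>The nonlinearity g(\<alpha>, z) = |z|^\<alpha> z satisfies, uniformly in \<alpha> \<le> a, the local Lipschitz
  bound |g(\<alpha>, w) - g(\<alpha>, v)| \<le> C (1 + |v|^a + |w - v|^a) |w - v|, and its real derivative at v is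
  H(\<alpha>, v, \<cdot>), with first-order remainder bounded by |h|^(\<alpha>+1), plus |v|^(\<alpha>-1) |h|^2 when \<alpha> > 1.
  Squaring these bounds produces terms like |h|^2 |v|^(2\<alpha>) and |h|^(2\<alpha>+2), which Holder's
  inequality on a domain of finite measure controls by powers of \<parallel>h\<parallel>_p precisely because
  p = 2(a + 1). This gives the L^p \<rightarrow> L^2 bound for H(\<alpha>, v, \<cdot>), a remainder of order
  \<parallel>h\<parallel>_p^(1 + min \<alpha> 1), and continuity in v; continuity in the exponent follows by dominated
  convergence with dominant 4 (1 + |v|^p).\<close>

section \<open>Estimates for real powers\<close>

lemma norm_powr_two: "norm (z :: 'a::real_normed_vector) powr 2 = norm z ^ 2"
  by (simp add: powr_numeral)

lemma powr_power2: "(t::real) \<ge> 0 \<Longrightarrow> (t powr e)^2 = t powr (2 * e)"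
  by (simp add: power2_eq_square powr_add[symmetric])

lemma power2_le_of_abs_le_sum:
  fixes x X Y :: real
  assumes "\<bar>x\<bar> \<le> X + Y" "X \<ge> 0" "Y \<ge> 0"
  shows "x^2 \<le> 2 * (X^2 + Y^2)"
proof -
  have "x^2 \<le> (X + Y)^2"
    using assms by (metis abs_ge_zero power2_abs power_mono)
  also have "\<dots> \<le> 2 * (X^2 + Y^2)"
    using zero_le_power2[of "X - Y"] by (simp add: power2_sum power2_diff)
  finally show ?thesis .
qed

lemma norm_add_powr_two_le:
  fixes x y :: "'a::real_normed_vector"
  shows "norm (x + y) powr 2 \<le> 2 * (norm x powr 2 + norm y powr 2)"
  using power2_le_of_abs_le_sum[of "norm (x + y)" "norm x" "norm y"] norm_triangle_ineq[of x y]
  by (simp add: norm_powr_two)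

lemma abs_diff_le_of_deriv_bound:
  fixes f f' :: "real \<Rightarrow> real"
  assumes "x > 0" "y > 0"
    and der: "\<And>z. z > 0 \<Longrightarrow> (f has_real_derivative f' z) (at z)"
    and bound: "\<And>z. min x y \<le> z \<Longrightarrow> z \<le> max x y \<Longrightarrow> \<bar>f' z\<bar> \<le> B"
  shows "\<bar>f y - f x\<bar> \<le> B * \<bar>y - x\<bar>"
proof -
  have ordered: "\<bar>f t - f s\<bar> \<le> B * \<bar>t - s\<bar>"
    if "s < t" "s > 0" "min x y \<le> s" "t \<le> max x y" for s t
  proof -
    obtain z where z: "s < z" "z < t" "f t - f s = (t - s) * f' z"
      using MVT2[OF \<open>s < t\<close>, of f f'] der \<open>s > 0\<close> by force
    have "\<bar>f' z\<bar> \<le> B" using bound z that by auto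
    then show ?thesis using z \<open>s < t\<close> by (simp add: abs_mult mult.commute mult_left_mono)
  qed
  consider "x < y" | "y < x" | "x = y" by linarith
  then show ?thesis
    using ordered[of x y] ordered[of y x] assms(1,2) by cases (auto simp: abs_minus_commute)
qed

lemma powr_le_max_powr:
  fixes x y z :: real
  assumes "x > 0" "y > 0" "min x y \<le> z" "z \<le> max x y"
  shows "z powr e \<le> max (x powr e) (y powr e)"
proof (cases "e \<ge> 0")
  case True
  then have "z powr e \<le> (max x y) powr e" using assms by (intro powr_mono2) auto
  then show ?thesis by (simp add: max_def split: if_splits)
next
  case False
  then have "z powr e \<le> (min x y) powr e" using assms by (intro powr_mono2') auto
  then show ?thesis by (simp add: min_def max_def split: if_splits)
qed

lemma abs_powr_diff_le:
  fixes x y :: real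
  assumes "x > 0" "y > 0"
  shows "\<bar>y powr c - x powr c\<bar> \<le> \<bar>c\<bar> * max (x powr (c-1)) (y powr (c-1)) * \<bar>y - x\<bar>"
proof (rule abs_diff_le_of_deriv_bound[OF assms])
  show "((\<lambda>z. z powr c) has_real_derivative c * z powr (c - 1)) (at z)" if "z > 0" for z
    using has_real_derivative_powr[OF that] .
  fix z assume "min x y \<le> z" "z \<le> max x y"
  then have "z powr (c-1) \<le> max (x powr (c-1)) (y powr (c-1))"
    using powr_le_max_powr[OF assms] by blast
  then show "\<bar>c * z powr (c - 1)\<bar> \<le> \<bar>c\<bar> * max (x powr (c - 1)) (y powr (c - 1))"
    by (simp add: abs_mult mult_left_mono)
qed

lemma abs_powr_diff_linear_le:
  fixes x y :: real
  assumes "x > 0" "y > 0"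
  shows "\<bar>y powr c - x powr c - c * x powr (c-1) * (y - x)\<bar>
     \<le> \<bar>c * (c - 1)\<bar> * max (x powr (c-2)) (y powr (c-2)) * (y - x)^2"
proof -
  define m where "m = max (x powr (c-2)) (y powr (c-2))"
  have "\<bar>y powr c - x powr c - c * x powr (c-1) * (y - x)\<bar>
      = \<bar>(y powr c - c * x powr (c-1) * y) - (x powr c - c * x powr (c-1) * x)\<bar>"
    by (simp add: algebra_simps)
  also have "\<dots> \<le> (\<bar>c * (c - 1)\<bar> * m * \<bar>y - x\<bar>) * \<bar>y - x\<bar>"
  proof (rule abs_diff_le_of_deriv_bound[OF assms])
    show "((\<lambda>z. z powr c - c * x powr (c - 1) * z) has_real_derivative
        c * z powr (c - 1) - c * x powr (c-1)) (at z)" if "z > 0" for z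
      using that by (auto intro!: derivative_eq_intros)
    fix z assume z: "min x y \<le> z" "z \<le> max x y"
    then have "z > 0" using assms by auto
    have "\<bar>z powr (c-1) - x powr (c-1)\<bar> \<le> \<bar>c-1\<bar> * max (x powr (c-2)) (z powr (c-2)) * \<bar>z - x\<bar>"
      using abs_powr_diff_le[OF \<open>x > 0\<close> \<open>z > 0\<close>, of "c - 1"] by (simp add: diff_diff_eq)
    also have "\<dots> \<le> \<bar>c-1\<bar> * m * \<bar>y - x\<bar>"
    proof (intro mult_mono mult_left_mono)
      show "max (x powr (c-2)) (z powr (c-2)) \<le> m"
        using powr_le_max_powr[OF assms z] by (auto simp: m_def)
      show "\<bar>z - x\<bar> \<le> \<bar>y - x\<bar>" using z by (auto simp: min_def max_def split: if_splits)
    qed (auto simp: m_def le_max_iff_disj)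
    finally show "\<bar>c * z powr (c - 1) - c * x powr (c - 1)\<bar> \<le> \<bar>c * (c - 1)\<bar> * m * \<bar>y - x\<bar>"
      by (simp add: abs_mult right_diff_distrib[symmetric] mult.assoc mult_left_mono)
  qed
  also have "\<dots> = \<bar>c * (c - 1)\<bar> * m * (y - x)^2"
    by (simp add: power2_eq_square abs_mult_self_eq)
  finally show ?thesis unfolding m_def .
qed

lemma max_powr_le_of_comparable:
  fixes x y :: real
  assumes "x > 0" "K \<ge> 1" "x / K \<le> y" "y \<le> K * x"
  shows "max (x powr e) (y powr e) \<le> K powr \<bar>e\<bar> * x powr e"
proof -
  have "y > 0" using assms by (smt (verit) divide_pos_pos)
  define t where "t = y / x"
  have "1 / K \<le> t" "t \<le> K" "t > 0"
    using assms \<open>y > 0\<close> by (auto simp: t_def field_simps)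
  have "t powr e \<le> K powr \<bar>e\<bar>"
  proof (cases "e \<ge> 0")
    case True
    then show ?thesis using \<open>t \<le> K\<close> \<open>t > 0\<close> by (simp add: powr_mono2)
  next
    case False
    then have "t powr e \<le> (1/K) powr e" using \<open>1 / K \<le> t\<close> \<open>K \<ge> 1\<close> by (intro powr_mono2') auto
    also have "\<dots> = K powr \<bar>e\<bar>" using False \<open>K \<ge> 1\<close> by (simp add: powr_divide powr_minus_divide)
    finally show ?thesis .
  qed
  then have "y powr e \<le> K powr \<bar>e\<bar> * x powr e"
    using \<open>t > 0\<close> \<open>x > 0\<close> mult_right_mono[of "t powr e" "K powr \<bar>e\<bar>" "x powr e"]
    by (simp add: t_def powr_divide)
  moreover have "x powr e \<le> K powr \<bar>e\<bar> * x powr e"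
    using \<open>K \<ge> 1\<close> ge_one_powr_ge_zero[of K "\<bar>e\<bar>"] mult_right_mono[of 1 "K powr \<bar>e\<bar>" "x powr e"]
    by simp
  ultimately show ?thesis by simp
qed

lemma abs_powr_diff_le_comparable:
  fixes X Y :: real
  assumes "X > 0" "K \<ge> 1" "X / K \<le> Y" "Y \<le> K * X"
  shows "\<bar>Y powr c - X powr c\<bar> \<le> \<bar>c\<bar> * K powr \<bar>c - 1\<bar> * X powr (c - 1) * \<bar>Y - X\<bar>"
proof -
  have "Y > 0" using assms by (smt (verit) divide_pos_pos)
  have "\<bar>Y powr c - X powr c\<bar> \<le> \<bar>c\<bar> * max (X powr (c-1)) (Y powr (c-1)) * \<bar>Y - X\<bar>"
    using abs_powr_diff_le[OF \<open>X > 0\<close> \<open>Y > 0\<close>] .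
  also have "\<dots> \<le> \<bar>c\<bar> * (K powr \<bar>c - 1\<bar> * X powr (c - 1)) * \<bar>Y - X\<bar>"
    using max_powr_le_of_comparable[OF assms] by (intro mult_right_mono mult_left_mono) auto
  finally show ?thesis by (simp add: mult.assoc)
qed

lemma abs_powr_diff_linear_le_comparable:
  fixes X Y :: real
  assumes "X > 0" "K \<ge> 1" "X / K \<le> Y" "Y \<le> K * X"
  shows "\<bar>Y powr c - X powr c - c * X powr (c-1) * (Y - X)\<bar>
     \<le> \<bar>c * (c - 1)\<bar> * K powr \<bar>c - 2\<bar> * X powr (c - 2) * (Y - X)^2"
proof -
  have "Y > 0" using assms by (smt (verit) divide_pos_pos)
  have "\<bar>Y powr c - X powr c - c * X powr (c-1) * (Y - X)\<bar>
      \<le> \<bar>c * (c - 1)\<bar> * max (X powr (c-2)) (Y powr (c-2)) * (Y - X)^2"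
    using abs_powr_diff_linear_le[OF \<open>X > 0\<close> \<open>Y > 0\<close>] .
  also have "\<dots> \<le> \<bar>c * (c - 1)\<bar> * (K powr \<bar>c - 2\<bar> * X powr (c - 2)) * (Y - X)^2"
    using max_powr_le_of_comparable[OF assms] by (intro mult_right_mono mult_left_mono) auto
  finally show ?thesis by (simp add: mult.assoc)
qed

lemma powr_le_one_plus_powr:
  fixes t :: real
  assumes "t \<ge> 0" "0 < e" "e \<le> q"
  shows "t powr e \<le> 1 + t powr q"
proof (cases "t \<le> 1")
  case True
  then have "t powr e \<le> 1" using assms by (simp add: powr_le1)
  then show ?thesis by (smt (verit) powr_ge_zero)
next
  case False
  then show ?thesis using assms powr_mono[of e q t] by (simp add: add_increasing)
qed

lemma Holder_inequality:
  fixes f g :: "'a \<Rightarrow> real"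
  assumes [measurable]: "f \<in> borel_measurable M" "g \<in> borel_measurable M"
    and f0: "\<And>x. f x \<ge> 0" and g0: "\<And>x. g x \<ge> 0"
    and r: "r > 1" and s: "s > 1" and rs: "1/r + 1/s = 1"
    and fi: "integrable M (\<lambda>x. f x powr r)" and gi: "integrable M (\<lambda>x. g x powr s)"
  shows "integrable M (\<lambda>x. f x * g x)"
    and "(\<integral>x. f x * g x \<partial>M) \<le> (\<integral>x. f x powr r \<partial>M) powr (1/r) * (\<integral>x. g x powr s \<partial>M) powr (1/s)"
proof -
  have Young: "f x * g x \<le> f x powr r / r + g x powr s / s" for x
    using Youngs_inequality[OF r s rs f0 g0] .
  show int: "integrable M (\<lambda>x. f x * g x)"
  proof (rule Bochner_Integration.integrable_bound)
    show "integrable M (\<lambda>x. f x powr r / r + g x powr s / s)" using fi gi by simp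
    show "AE x in M. norm (f x * g x) \<le> norm (f x powr r / r + g x powr s / s)"
      using Young f0 g0 by (intro AE_I2) (smt (verit) real_norm_def zero_le_mult_iff)
  qed measurable
  define A where "A = (\<integral>x. f x powr r \<partial>M)"
  define B where "B = (\<integral>x. g x powr s \<partial>M)"
  have "A \<ge> 0" "B \<ge> 0" unfolding A_def B_def by (simp_all add: integral_nonneg)
  show "(\<integral>x. f x * g x \<partial>M) \<le> A powr (1/r) * B powr (1/s)"
  proof (cases "A = 0 \<or> B = 0")
    case True
    then have "AE x in M. f x powr r = 0 \<or> g x powr s = 0"
      using fi gi unfolding A_def B_def by (subst (asm) (1 2) integral_nonneg_eq_0_iff_AE) auto
    then have "AE x in M. f x * g x = 0" by eventually_elim auto
    then show ?thesis by (simp add: integral_eq_zero_AE)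
  next
    case False
    with \<open>A \<ge> 0\<close> \<open>B \<ge> 0\<close> have "A > 0" "B > 0" by auto
    define a where "a = A powr (1/r)"
    define b where "b = B powr (1/s)"
    have "a > 0" "b > 0" "a powr r = A" "b powr s = B"
      using \<open>A > 0\<close> \<open>B > 0\<close> r s by (simp_all add: a_def b_def powr_powr)
    \<comment> \<open>Young's inequality applied to the normalised functions f/a and g/b\<close>
    have "f x * g x \<le> a * b * (f x powr r / (r * A) + g x powr s / (s * B))" for x
    proof -
      have "(f x / a) * (g x / b) \<le> (f x / a) powr r / r + (g x / b) powr s / s"
        using Youngs_inequality[OF r s rs, of "f x / a" "g x / b"] f0 g0 \<open>a > 0\<close> \<open>b > 0\<close> by auto
      also have "\<dots> = f x powr r / (r * A) + g x powr s / (s * B)"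
        using f0 g0 \<open>a > 0\<close> \<open>b > 0\<close> \<open>a powr r = A\<close> \<open>b powr s = B\<close>
        by (simp add: powr_divide mult.commute)
      finally show ?thesis using \<open>a > 0\<close> \<open>b > 0\<close> by (simp add: field_simps)
    qed
    then have "(\<integral>x. f x * g x \<partial>M) \<le> (\<integral>x. a * b * (f x powr r / (r * A) + g x powr s / (s * B)) \<partial>M)"
      using fi gi by (intro integral_mono int) auto
    also have "\<dots> = a * b * (A / (r * A) + B / (s * B))"
      using fi gi by (simp add: A_def B_def)
    also have "\<dots> = a * b" using \<open>A > 0\<close> \<open>B > 0\<close> rs by (simp add: field_simps)
    finally show ?thesis by (simp add: a_def b_def)
  qed
qed

context finite_measure
begin

lemma integrable_powr_smaller_exponent:
  fixes f :: "'a \<Rightarrow> real"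
  assumes [measurable]: "f \<in> borel_measurable M" and "\<And>x. f x \<ge> 0"
    and "integrable M (\<lambda>x. f x powr q)" and "0 < e" "e \<le> q"
  shows "integrable M (\<lambda>x. f x powr e)"
proof (rule Bochner_Integration.integrable_bound)
  show "integrable M (\<lambda>x. 1 + f x powr q)" using assms by simp
  show "AE x in M. norm (f x powr e) \<le> norm (1 + f x powr q)"
    using powr_le_one_plus_powr[OF assms(2) assms(4,5)] by (intro AE_I2) simp
qed measurable

lemma integral_powr_le_integral_powr:
  fixes f :: "'a \<Rightarrow> real"
  assumes [measurable]: "f \<in> borel_measurable M" and f0: "\<And>x. f x \<ge> 0"
    and fi: "integrable M (\<lambda>x. f x powr p)" and "0 < q" "q \<le> p"
  shows "(\<integral>x. f x powr q \<partial>M) \<le> (measure M (space M) + 1) * (\<integral>x. f x powr p \<partial>M) powr (q / p)"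
proof (cases "q = p")
  case True
  have "(\<integral>x. f x powr p \<partial>M) \<ge> 0" by (simp add: integral_nonneg)
  then show ?thesis using True \<open>0 < q\<close> by (simp add: distrib_right)
next
  case False
  with \<open>q \<le> p\<close> have "q < p" by simp
  define r where "r = p / q"
  define s where "s = p / (p - q)"
  have "r > 1" "s > 1" "1/r + 1/s = 1"
    using \<open>0 < q\<close> \<open>q < p\<close> by (auto simp: r_def s_def field_simps)
  have fr: "(f x powr q) powr r = f x powr p" for x
    using \<open>0 < q\<close> by (simp add: powr_powr r_def)
  \<comment> \<open>Holder with the constant function 1\<close>
  have "(\<integral>x. f x powr q \<partial>M) \<le> (\<integral>x. f x powr p \<partial>M) powr (q/p) * measure M (space M) powr (1/s)"
    using Holder_inequality(2)[of "\<lambda>x. f x powr q" M "\<lambda>_. 1" r s] f0 \<open>r > 1\<close> \<open>s > 1\<close>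
      \<open>1/r + 1/s = 1\<close> fi \<open>0 < q\<close>
    unfolding fr by (simp add: r_def)
  also have "measure M (space M) powr (1/s) \<le> measure M (space M) + 1"
    using \<open>s > 1\<close> powr_le_one_plus_powr[of "measure M (space M)" "1/s" 1] by simp
  then have "(\<integral>x. f x powr p \<partial>M) powr (q/p) * measure M (space M) powr (1/s)
      \<le> (\<integral>x. f x powr p \<partial>M) powr (q/p) * (measure M (space M) + 1)"
    by (intro mult_left_mono) simp_all
  finally show ?thesis by (simp add: mult.commute)
qed

end

section \<open>Pointwise estimates for the nonlinearity\<close>

lemma norm_gnl: "\<alpha> > 0 \<Longrightarrow> norm (gnl \<alpha> z) = norm z powr (\<alpha> + 1)"
  by (cases "z = 0") (simp_all add: gnl_def norm_mult powr_add)

lemma norm_gnl_powr_two_le: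
  assumes "a > 0" "\<alpha> \<le> a"
  shows "norm (gnl \<alpha> z) powr 2 \<le> 1 + norm z powr (2 * (a + 1))"
proof (cases "\<alpha> > 0")
  case True
  then have "norm (gnl \<alpha> z) powr 2 = norm z powr (2 * (\<alpha> + 1))"
    by (simp add: norm_gnl powr_powr mult.commute)
  also have "\<dots> \<le> 1 + norm z powr (2 * (a + 1))"
    using True assms by (intro powr_le_one_plus_powr) auto
  finally show ?thesis .
next
  case False
  then show ?thesis
    using assms powr_le_one_plus_powr[of "norm z" 2 "2 * (a + 1)"] by (simp add: gnl_def)
qed

lemma gnl_tendsto_exponent:
  assumes "X \<longlonglongrightarrow> \<alpha>"
  shows "(\<lambda>n. gnl (X n) z) \<longlonglongrightarrow> gnl \<alpha> z"
proof (cases "z = 0")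
  case False
  then have gnl_eq: "gnl \<beta> z = complex_of_real (norm z powr max \<beta> 0) * z" for \<beta>
    by (simp add: gnl_def max_def)
  show ?thesis
    unfolding gnl_eq using False by (intro tendsto_intros tendsto_powr assms) auto
next
  case True
  have "gnl \<beta> 0 = 0" for \<beta> by (simp add: gnl_def)
  then show ?thesis using True by simp
qed

lemma Hnl_pos:
  "\<alpha> > 0 \<Longrightarrow> Hnl \<alpha> v u = complex_of_real (norm v powr \<alpha>) * u
      + complex_of_real (\<alpha> * norm v powr (\<alpha> - 2) * Re (cnj v * u)) * v"
  by (simp add: Hnl_def)

lemma Hnl_add: "Hnl \<alpha> z (u + w) = Hnl \<alpha> z u + Hnl \<alpha> z w"
  by (simp add: Hnl_def algebra_simps)

lemma Hnl_scale: "Hnl \<alpha> z (complex_of_real c * u) = complex_of_real c * Hnl \<alpha> z u"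
  by (simp add: Hnl_def algebra_simps)

lemma norm_Hnl_le:
  assumes "\<alpha> > 0"
  shows "norm (Hnl \<alpha> v u) \<le> (1 + \<alpha>) * norm v powr \<alpha> * norm u"
proof (cases "v = 0")
  case True then show ?thesis using assms by (simp add: Hnl_def)
next
  case False
  have v_sq: "norm v powr (\<alpha> - 2) * (norm v * norm v) = norm v powr \<alpha>"
    using False powr_add[of "norm v" "\<alpha> - 2" 2] by (simp add: powr_numeral power2_eq_square)
  have "norm (Hnl \<alpha> v u) \<le> norm (complex_of_real (norm v powr \<alpha>) * u)
      + norm (complex_of_real (\<alpha> * norm v powr (\<alpha> - 2) * Re (cnj v * u)) * v)"
    unfolding Hnl_pos[OF assms] by (rule norm_triangle_ineq)
  also have "\<dots> = norm v powr \<alpha> * norm u + \<alpha> * norm v powr (\<alpha> - 2) * \<bar>Re (cnj v * u)\<bar> * norm v"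
    using assms by (simp only: norm_mult norm_of_real abs_mult) simp
  also have "\<dots> \<le> norm v powr \<alpha> * norm u + \<alpha> * norm v powr (\<alpha> - 2) * (norm v * norm u) * norm v"
    using assms abs_Re_le_cmod[of "cnj v * u"]
    by (intro add_left_mono mult_right_mono mult_left_mono) (auto simp: norm_mult)
  also have "\<dots> = (1 + \<alpha>) * norm v powr \<alpha> * norm u"
    using v_sq by (simp add: algebra_simps)
  finally show ?thesis .
qed

lemma norm_Hnl_powr_two_le:
  assumes "\<alpha> > 0"
  shows "norm (Hnl \<alpha> v u) powr 2 \<le> (1 + \<alpha>)^2 * (norm u powr 2 * norm v powr (2 * \<alpha>))"
proof -
  have "norm (Hnl \<alpha> v u)^2 \<le> ((1 + \<alpha>) * norm v powr \<alpha> * norm u)^2"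
    using norm_Hnl_le[OF assms] by (intro power_mono) auto
  then show ?thesis
    by (simp add: norm_powr_two power_mult_distrib powr_powr[symmetric] powr_numeral mult_ac)
qed

lemma norm_add_comparable:
  fixes v h :: "'a::real_normed_vector"
  assumes "2 * norm h < norm v"
  shows "norm v / 2 \<le> norm (v + h)" "norm (v + h) \<le> 2 * norm v"
  using assms norm_triangle_ineq[of v h] norm_triangle_ineq4[of "v + h" h] norm_ge_zero[of h]
  by auto

lemma norm_gnl_diff_le_far:
  assumes "\<beta> > 0" "norm v \<le> 2 * norm d"
  shows "norm (gnl \<beta> (v + d) - gnl \<beta> v) \<le> 2 * 3 powr (\<beta> + 1) * norm d powr (\<beta> + 1)"
proof -
  have "norm (v + d) \<le> 3 * norm d" "norm v \<le> 3 * norm d"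
    using assms norm_triangle_ineq[of v d] norm_ge_zero[of d] by linarith+
  then have "norm (v + d) powr (\<beta> + 1) + norm v powr (\<beta> + 1) \<le> 2 * (3 * norm d) powr (\<beta> + 1)"
    using assms by (smt (verit) norm_ge_zero powr_mono2)
  then show ?thesis
    using norm_triangle_ineq4[of "gnl \<beta> (v + d)" "gnl \<beta> v"] assms
    by (simp add: norm_gnl powr_mult)
qed

lemma norm_gnl_diff_le_near:
  assumes "\<beta> > 0" "2 * norm d < norm v"
  shows "norm (gnl \<beta> (v + d) - gnl \<beta> v) \<le> (\<beta> * 2 powr \<bar>\<beta> - 1\<bar> + 2 powr \<beta>) * norm v powr \<beta> * norm d"
proof -
  define w where "w = v + d"
  have "norm v > 0" using assms by (smt (verit) norm_ge_zero)
  have w: "norm v / 2 \<le> norm w" "norm w \<le> 2 * norm v"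
    using norm_add_comparable[OF assms(2)] by (simp_all add: w_def)
  have "\<bar>norm w powr \<beta> - norm v powr \<beta>\<bar> * norm v
      \<le> (\<beta> * 2 powr \<bar>\<beta> - 1\<bar> * norm v powr (\<beta> - 1) * \<bar>norm w - norm v\<bar>) * norm v"
    using abs_powr_diff_le_comparable[OF \<open>norm v > 0\<close> _ w, of \<beta>] assms(1)
    by (intro mult_right_mono) auto
  also have "\<dots> \<le> \<beta> * 2 powr \<bar>\<beta> - 1\<bar> * norm v powr \<beta> * norm d"
    using \<open>norm v > 0\<close> assms(1) norm_triangle_ineq3[of w v]
      powr_add[of "norm v" "\<beta> - 1" 1]
    by (simp add: w_def mult_left_mono mult.commute mult.left_commute)
  finally have radial: "\<bar>norm w powr \<beta> - norm v powr \<beta>\<bar> * norm v \<le> \<beta> * 2 powr \<bar>\<beta> - 1\<bar> * norm v powr \<beta> * norm d" .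
  have "norm w powr \<beta> \<le> 2 powr \<beta> * norm v powr \<beta>"
    using w assms(1) powr_mono2[of \<beta> "norm w" "2 * norm v"] by (simp add: powr_mult)
  then have tangential: "norm w powr \<beta> * norm d \<le> 2 powr \<beta> * norm v powr \<beta> * norm d"
    by (intro mult_right_mono) auto
  have "gnl \<beta> w - gnl \<beta> v
      = complex_of_real (norm w powr \<beta> - norm v powr \<beta>) * v + complex_of_real (norm w powr \<beta>) * d"
    using assms(1) by (simp add: gnl_def w_def algebra_simps)
  then have "norm (gnl \<beta> w - gnl \<beta> v) \<le> \<bar>norm w powr \<beta> - norm v powr \<beta>\<bar> * norm v + norm w powr \<beta> * norm d"
    using norm_triangle_ineq[of "complex_of_real (norm w powr \<beta> - norm v powr \<beta>) * v"
        "complex_of_real (norm w powr \<beta>) * d"]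
    by (simp add: norm_mult del: of_real_diff)
  then show ?thesis using radial tangential by (simp add: w_def algebra_simps)
qed

lemma norm_gnl_diff_le:
  assumes "a > 0"
  obtains C where "\<And>\<beta> v w. \<beta> \<le> a \<Longrightarrow>
    norm (gnl \<beta> w - gnl \<beta> v) \<le> C * (1 + norm v powr a + norm (w - v) powr a) * norm (w - v)"
proof
  define C where "C = 2 * 3 powr (a + 1) + a * 2 powr (a + 1) + 2 powr a + 1"
  fix \<beta> and v w :: complex assume "\<beta> \<le> a"
  define d where "d = w - v"
  define S where "S = 1 + norm v powr a + norm d powr a"
  have "C \<ge> 1" "S \<ge> 1" using assms by (simp_all add: C_def S_def)
  have powr_le_S: "norm v powr \<beta> \<le> S" "norm d powr \<beta> \<le> S" if "\<beta> > 0"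
    using powr_le_one_plus_powr[of "norm v" \<beta> a] powr_le_one_plus_powr[of "norm d" \<beta> a]
      that \<open>\<beta> \<le> a\<close>
    unfolding S_def by (smt (verit) norm_ge_zero powr_ge_zero)+
  have "norm (gnl \<beta> (v + d) - gnl \<beta> v) \<le> C * S * norm d"
  proof (cases "\<beta> > 0")
    case False
    then have "norm (gnl \<beta> (v + d) - gnl \<beta> v) = 1 * 1 * norm d" by (simp add: gnl_def)
    also have "\<dots> \<le> C * S * norm d"
      using \<open>C \<ge> 1\<close> \<open>S \<ge> 1\<close> by (intro mult_right_mono mult_mono) auto
    finally show ?thesis .
  next
    case True
    have "2 * 3 powr (\<beta> + 1) * norm d powr (\<beta> + 1) = 2 * 3 powr (\<beta> + 1) * norm d powr \<beta> * norm d"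
      by (cases "d = 0") (simp_all add: powr_add)
    also have "\<dots> \<le> C * S * norm d"
      using powr_le_S(2)[OF True] \<open>\<beta> \<le> a\<close> assms
      by (intro mult_right_mono mult_mono) (auto simp: C_def add_increasing2)
    finally have "2 * 3 powr (\<beta> + 1) * norm d powr (\<beta> + 1) \<le> C * S * norm d" .
    moreover have "(\<beta> * 2 powr \<bar>\<beta> - 1\<bar> + 2 powr \<beta>) * norm v powr \<beta> * norm d \<le> C * S * norm d"
    proof (intro mult_right_mono mult_mono)
      have "\<beta> * 2 powr \<bar>\<beta> - 1\<bar> \<le> a * 2 powr (a + 1)"
        using True \<open>\<beta> \<le> a\<close> assms by (intro mult_mono) auto
      moreover have "2 powr \<beta> \<le> 2 powr a" using \<open>\<beta> \<le> a\<close> by simp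
      ultimately show "\<beta> * 2 powr \<bar>\<beta> - 1\<bar> + 2 powr \<beta> \<le> C"
        unfolding C_def by (smt (verit) powr_ge_zero)
    qed (use powr_le_S(1)[OF True] \<open>C \<ge> 1\<close> in auto)
    ultimately show ?thesis
      using norm_gnl_diff_le_far[OF True] norm_gnl_diff_le_near[OF True] by (smt (verit))
  qed
  then show "norm (gnl \<beta> w - gnl \<beta> v) \<le> C * (1 + norm v powr a + norm (w - v) powr a) * norm (w - v)"
    by (simp add: d_def S_def)
qed

lemma norm_gnl_diff_powr_two_le:
  assumes "a > 0"
  obtains L where "L \<ge> 0" "\<And>\<beta> v w. \<beta> \<le> a \<Longrightarrow> norm (gnl \<beta> w - gnl \<beta> v) powr 2
      \<le> L * (norm (w - v) powr 2 + norm (w - v) powr 2 * norm v powr (2 * a) + norm (w - v) powr (2 * (a + 1)))"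
proof -
  obtain C where C: "\<And>\<beta> v w. \<beta> \<le> a \<Longrightarrow>
      norm (gnl \<beta> w - gnl \<beta> v) \<le> C * (1 + norm v powr a + norm (w - v) powr a) * norm (w - v)"
    using norm_gnl_diff_le[OF assms] by blast
  have "norm (gnl \<beta> w - gnl \<beta> v) powr 2
      \<le> 3 * C^2 * (norm (w - v) powr 2 + norm (w - v) powr 2 * norm v powr (2 * a) + norm (w - v) powr (2 * (a + 1)))"
    if "\<beta> \<le> a" for \<beta> and v w :: complex
  proof -
    define D where "D = norm (w - v)"
    define V where "V = norm v"
    have "D \<ge> 0" "V \<ge> 0" by (simp_all add: D_def V_def)
    have "norm (gnl \<beta> w - gnl \<beta> v)^2 \<le> (C * (1 + V powr a + D powr a) * D)^2"
      using C[OF that, where v = v and w = w] by (intro power_mono) (auto simp: D_def V_def)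
    also have "\<dots> = C^2 * (1 + V powr a + D powr a)^2 * D^2" by (simp add: power_mult_distrib)
    also have "\<dots> \<le> C^2 * (3 * (1 + (V powr a)^2 + (D powr a)^2)) * D^2"
      using zero_le_power2[of "1 - V powr a"] zero_le_power2[of "1 - D powr a"]
        zero_le_power2[of "V powr a - D powr a"]
      by (intro mult_right_mono mult_left_mono) (auto simp: power2_eq_square algebra_simps)
    also have "\<dots> = 3 * C^2 * (D powr 2 + D powr 2 * V powr (2 * a) + D powr (2 * (a + 1)))"
    proof -
      have "(D powr a)^2 * D^2 = D powr (2 * (a + 1))"
        using \<open>D \<ge> 0\<close> powr_add[of D "2 * a" 2]
        by (simp add: powr_power2 norm_powr_two add.commute powr_numeral distrib_left)
      then show ?thesis
        using \<open>V \<ge> 0\<close> \<open>D \<ge> 0\<close> by (simp add: powr_power2 powr_numeral distrib_left distrib_right mult_ac)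
    qed
    finally show ?thesis by (simp add: D_def V_def norm_powr_two)
  qed
  then show ?thesis using that[of "3 * C^2"] by simp
qed

definition gnl_rem :: "real \<Rightarrow> complex \<Rightarrow> complex \<Rightarrow> complex" where
  "gnl_rem \<alpha> v h = gnl \<alpha> (v + h) - gnl \<alpha> v - Hnl \<alpha> v h"

lemma norm_gnl_rem_le_far:
  assumes "\<alpha> > 0"
  obtains C where "C \<ge> 0"
    "\<And>v h. norm v \<le> 2 * norm h \<Longrightarrow> norm (gnl_rem \<alpha> v h) \<le> C * norm h powr (\<alpha> + 1)"
proof
  show "2 * 3 powr (\<alpha> + 1) + (1 + \<alpha>) * 2 powr \<alpha> \<ge> 0" using assms by simp
  fix v h :: complex assume vh: "norm v \<le> 2 * norm h"
  have "norm (Hnl \<alpha> v h) \<le> (1 + \<alpha>) * (2 * norm h) powr \<alpha> * norm h"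
    using norm_Hnl_le[OF assms, of v h] powr_mono2[of \<alpha> "norm v" "2 * norm h"] vh assms
    by (smt (verit, best) mult_right_mono mult_left_mono norm_ge_zero)
  also have "\<dots> = (1 + \<alpha>) * 2 powr \<alpha> * norm h powr (\<alpha> + 1)"
    by (cases "h = 0") (simp_all add: powr_mult powr_add)
  finally show "norm (gnl_rem \<alpha> v h) \<le> (2 * 3 powr (\<alpha> + 1) + (1 + \<alpha>) * 2 powr \<alpha>) * norm h powr (\<alpha> + 1)"
    using norm_gnl_diff_le_far[OF assms vh] norm_triangle_ineq4[of "gnl \<alpha> (v + h) - gnl \<alpha> v" "Hnl \<alpha> v h"]
    by (simp add: gnl_rem_def algebra_simps)
qed

lemma sq_norm_add_comparable:
  fixes v h :: complex
  assumes "2 * norm h < norm v"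
  defines "X \<equiv> norm v powr 2" and "Y \<equiv> norm (v + h) powr 2"
  shows "X > 0" "X / 4 \<le> Y" "Y \<le> 4 * X" "\<bar>Y - X\<bar> \<le> 3 * norm v * norm h"
proof -
  have "norm v > 0" using assms(1) by (smt (verit) norm_ge_zero)
  then show "X > 0" by (simp add: X_def)
  have "norm v / 2 \<le> norm (v + h)" "norm (v + h) \<le> 2 * norm v"
    using norm_add_comparable[OF assms(1)] by auto
  then have "(norm v / 2)^2 \<le> norm (v + h)^2" "norm (v + h)^2 \<le> (2 * norm v)^2"
    using \<open>norm v > 0\<close> by (intro power_mono; simp)+
  then show "X / 4 \<le> Y" "Y \<le> 4 * X"
    by (simp_all add: X_def Y_def norm_powr_two power_divide power_mult_distrib)
  have "Y - X = 2 * Re (cnj v * h) + norm h ^ 2"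
    unfolding X_def Y_def norm_powr_two cmod_power2
    by (simp add: power2_eq_square algebra_simps)
  moreover have "\<bar>Re (cnj v * h)\<bar> \<le> norm v * norm h"
    using abs_Re_le_cmod[of "cnj v * h"] by (simp add: norm_mult)
  moreover have "norm h ^ 2 \<le> norm v * norm h"
    using assms(1) norm_ge_zero[of h] unfolding power2_eq_square
    by (intro mult_right_mono) linarith+
  ultimately show "\<bar>Y - X\<bar> \<le> 3 * norm v * norm h"
    using zero_le_power2[of "norm h"] by linarith
qed

text \<open>Writing |z|^\<alpha> = (|z|^2)^(\<alpha>/2) turns the remainder into Taylor remainders of the smooth
  function t \<mapsto> t^(\<alpha>/2) at X = |v|^2, because 2 Re (cnj v * h) = |v + h|^2 - |v|^2 - |h|^2.\<close>

lemma gnl_rem_eq_squares: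
  fixes v h :: complex
  assumes "\<alpha> > 0" "v \<noteq> 0"
  defines "X \<equiv> norm v powr 2" and "Y \<equiv> norm (v + h) powr 2" and "c \<equiv> \<alpha> / 2"
  shows "gnl_rem \<alpha> v h =
      complex_of_real (Y powr c - X powr c - c * X powr (c - 1) * (Y - X) + c * X powr (c - 1) * norm h ^ 2) * v
    + complex_of_real (Y powr c - X powr c) * h"
proof -
  have "norm (v + h) powr \<alpha> = Y powr c" "norm v powr \<alpha> = X powr c"
    "norm v powr (\<alpha> - 2) = X powr (c - 1)"
    unfolding X_def Y_def c_def powr_powr by (simp_all add: algebra_simps)
  moreover have "2 * Re (cnj v * h) = Y - X - norm h ^ 2"
    unfolding X_def Y_def norm_powr_two cmod_power2 by (simp add: power2_eq_square algebra_simps)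
  ultimately have "Hnl \<alpha> v h = complex_of_real (X powr c) * h
      + complex_of_real (c * X powr (c - 1) * (Y - X - norm h ^ 2)) * v"
    "gnl \<alpha> (v + h) = complex_of_real (Y powr c) * (v + h)" "gnl \<alpha> v = complex_of_real (X powr c) * v"
    using assms(1) by (simp_all add: Hnl_pos gnl_def c_def flip: \<open>2 * Re (cnj v * h) = _\<close>)
  then show ?thesis by (simp add: gnl_rem_def algebra_simps)
qed

lemma norm_gnl_rem_le_near:
  assumes "\<alpha> > 0"
  obtains C where "C \<ge> 0"
    "\<And>v h. 2 * norm h < norm v \<Longrightarrow> norm (gnl_rem \<alpha> v h) \<le> C * norm v powr (\<alpha> - 1) * norm h powr 2"
proof
  define c where "c = \<alpha> / 2"
  define C where "C = 9 * \<bar>c * (c - 1)\<bar> * 4 powr \<bar>c - 2\<bar> + c + 3 * c * 4 powr \<bar>c - 1\<bar>"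
  show "C \<ge> 0" using assms by (simp add: C_def c_def)
  fix v h :: complex assume vh: "2 * norm h < norm v"
  define X where "X = norm v powr 2"
  define Y where "Y = norm (v + h) powr 2"
  define T where "T = X powr (c - 1)"
  note XY = sq_norm_add_comparable[OF vh, folded X_def Y_def]
  have "v \<noteq> 0" "T \<ge> 0" "c > 0" using XY(1) assms by (auto simp: X_def T_def c_def)
  have XT: "X powr (c - 2) * X = T"
    using XY(1) powr_add[of X "c - 2" 1] by (simp add: T_def)
  have Tv: "T * norm v = norm v powr (\<alpha> - 1)"
    using \<open>v \<noteq> 0\<close> powr_add[of "norm v" "\<alpha> - 2" 1]
    unfolding T_def X_def powr_powr by (simp add: c_def algebra_simps)
  have "(Y - X)^2 \<le> (3 * norm v * norm h)^2"
    using XY(4) by (metis abs_ge_zero power2_abs power_mono)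
  then have YX_sq: "(Y - X)^2 \<le> 9 * X * norm h ^ 2"
    by (simp add: X_def norm_powr_two power_mult_distrib)
  define A where "A = Y powr c - X powr c - c * X powr (c - 1) * (Y - X) + c * X powr (c - 1) * norm h ^ 2"
  define B where "B = Y powr c - X powr c"
  have "\<bar>A\<bar> \<le> \<bar>c * (c - 1)\<bar> * 4 powr \<bar>c - 2\<bar> * X powr (c - 2) * (Y - X)^2 + c * T * norm h ^ 2"
    using abs_powr_diff_linear_le_comparable[OF XY(1) _ XY(2,3), of c] \<open>c > 0\<close> \<open>T \<ge> 0\<close>
    unfolding A_def T_def by (smt (verit) zero_le_power2 zero_le_mult_iff)
  also have "\<dots> \<le> \<bar>c * (c - 1)\<bar> * 4 powr \<bar>c - 2\<bar> * X powr (c - 2) * (9 * X * norm h ^ 2) + c * T * norm h ^ 2"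
    using YX_sq by (intro add_right_mono mult_left_mono) auto
  also have "\<dots> = (9 * \<bar>c * (c - 1)\<bar> * 4 powr \<bar>c - 2\<bar> + c) * T * norm h ^ 2"
    using XT by (simp add: algebra_simps)
  finally have A_le: "\<bar>A\<bar> \<le> (9 * \<bar>c * (c - 1)\<bar> * 4 powr \<bar>c - 2\<bar> + c) * T * norm h ^ 2" .
  have "\<bar>B\<bar> \<le> c * 4 powr \<bar>c - 1\<bar> * T * (3 * norm v * norm h)"
    using abs_powr_diff_le_comparable[OF XY(1) _ XY(2,3), of c] XY(4) \<open>c > 0\<close> \<open>T \<ge> 0\<close>
    unfolding B_def T_def by (smt (verit) mult_left_mono powr_ge_zero zero_le_mult_iff)
  then have B_le: "\<bar>B\<bar> \<le> 3 * c * 4 powr \<bar>c - 1\<bar> * T * norm v * norm h"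
    by (simp add: algebra_simps)
  have "norm (gnl_rem \<alpha> v h) \<le> \<bar>A\<bar> * norm v + \<bar>B\<bar> * norm h"
    using gnl_rem_eq_squares[OF assms \<open>v \<noteq> 0\<close>, of h, folded X_def Y_def c_def, folded A_def B_def]
      norm_triangle_ineq[of "complex_of_real A * v" "complex_of_real B * h"]
    by (simp add: norm_mult)
  also have "\<dots> \<le> C * (T * norm v) * norm h ^ 2"
    using mult_right_mono[OF A_le, of "norm v"] mult_right_mono[OF B_le, of "norm h"]
    by (simp add: C_def algebra_simps power2_eq_square)
  finally show "norm (gnl_rem \<alpha> v h) \<le> C * norm v powr (\<alpha> - 1) * norm h powr 2"
    by (simp add: Tv norm_powr_two)
qed

lemma norm_gnl_rem_le:
  assumes "\<alpha> > 0"
  obtains C where "C \<ge> 0" "\<And>v h. norm (gnl_rem \<alpha> v h)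
      \<le> C * (norm h powr (\<alpha> + 1) + (if \<alpha> > 1 then norm v powr (\<alpha> - 1) * norm h powr 2 else 0))"
proof -
  obtain C1 where "C1 \<ge> 0" and far:
    "\<And>v h. norm v \<le> 2 * norm h \<Longrightarrow> norm (gnl_rem \<alpha> v h) \<le> C1 * norm h powr (\<alpha> + 1)"
    using norm_gnl_rem_le_far[OF assms] by blast
  obtain C2 where "C2 \<ge> 0" and near:
    "\<And>v h. 2 * norm h < norm v \<Longrightarrow> norm (gnl_rem \<alpha> v h) \<le> C2 * norm v powr (\<alpha> - 1) * norm h powr 2"
    using norm_gnl_rem_le_near[OF assms] by blast
  \<comment> \<open>for \<open>\<alpha> \<le> 1\<close> the exponent \<open>\<alpha> - 1\<close> is nonpositive, so \<open>|v| > 2|h|\<close> may be traded for \<open>|h|\<close>\<close>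
  have near_small: "norm v powr (\<alpha> - 1) * norm h powr 2 \<le> norm h powr (\<alpha> + 1)"
    if "\<alpha> \<le> 1" "2 * norm h < norm v" for v h :: complex
  proof (cases "h = 0")
    case False
    have "norm v powr (\<alpha> - 1) \<le> (2 * norm h) powr (\<alpha> - 1)"
      using that False by (intro powr_mono2') auto
    also have "\<dots> \<le> norm h powr (\<alpha> - 1)"
      using that powr_mono[of "\<alpha> - 1" 0 2] mult_right_mono[of "2 powr (\<alpha> - 1)" 1 "norm h powr (\<alpha> - 1)"]
      by (simp add: powr_mult)
    finally show ?thesis
      using powr_add[of "norm h" "\<alpha> - 1" 2] by (simp add: mult_right_mono add.commute)
  qed simp
  show ?thesis
  proof
    show "C1 + C2 \<ge> 0" using \<open>C1 \<ge> 0\<close> \<open>C2 \<ge> 0\<close> by simp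
    fix v h :: complex
    define E where "E = (if \<alpha> > 1 then norm v powr (\<alpha> - 1) * norm h powr 2 else 0)"
    have "E \<ge> 0" by (simp add: E_def)
    have "norm (gnl_rem \<alpha> v h) \<le> (C1 + C2) * (norm h powr (\<alpha> + 1) + E)"
    proof (cases "norm v \<le> 2 * norm h")
      case True
      have "C1 * norm h powr (\<alpha> + 1) \<le> (C1 + C2) * (norm h powr (\<alpha> + 1) + E)"
        using \<open>C1 \<ge> 0\<close> \<open>C2 \<ge> 0\<close> \<open>E \<ge> 0\<close> by (intro mult_mono) auto
      then show ?thesis using far[OF True] by linarith
    next
      case False
      then have "norm v powr (\<alpha> - 1) * norm h powr 2 \<le> norm h powr (\<alpha> + 1) + E"
        using near_small[where v = v and h = h] by (cases "\<alpha> > 1") (auto simp: E_def)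
      then have "C2 * (norm v powr (\<alpha> - 1) * norm h powr 2) \<le> C2 * (norm h powr (\<alpha> + 1) + E)"
        using \<open>C2 \<ge> 0\<close> by (rule mult_left_mono)
      then have "norm (gnl_rem \<alpha> v h) \<le> C2 * (norm h powr (\<alpha> + 1) + E)"
        using near[where v = v and h = h] False by (simp add: mult.assoc)
      also have "\<dots> \<le> (C1 + C2) * (norm h powr (\<alpha> + 1) + E)"
        using \<open>C1 \<ge> 0\<close> \<open>E \<ge> 0\<close> by (intro mult_right_mono) auto
      finally show ?thesis .
    qed
    then show "norm (gnl_rem \<alpha> v h)
      \<le> (C1 + C2) * (norm h powr (\<alpha> + 1) + (if \<alpha> > 1 then norm v powr (\<alpha> - 1) * norm h powr 2 else 0))"
      by (simp add: E_def)
  qed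
qed

section \<open>Lebesgue spaces on a domain of finite measure\<close>

lemma borel_measurable_cnj [measurable]: "cnj \<in> borel_measurable borel"
  by (intro borel_measurable_continuous_onI continuous_intros)

lemma gnl_measurable [measurable]:
  "v \<in> borel_measurable M \<Longrightarrow> (\<lambda>x. gnl \<alpha> (v x)) \<in> borel_measurable M"
  unfolding gnl_def by (cases "\<alpha> > 0") simp_all

lemma Hnl_measurable [measurable]:
  "v \<in> borel_measurable M \<Longrightarrow> u \<in> borel_measurable M \<Longrightarrow> (\<lambda>x. Hnl \<alpha> (v x) (u x)) \<in> borel_measurable M"
  by (cases "\<alpha> > 0") (simp_all add: Hnl_pos, simp add: Hnl_def)

lemma Lnorm_nonneg: "Lnorm r \<Omega> f \<ge> 0"
  by (simp add: Lnorm_def)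

lemma Lnorm_powr: "r > 0 \<Longrightarrow> Lnorm r \<Omega> f powr r = (\<integral>x. norm (f x) powr r \<partial>lebesgue_on \<Omega>)"
  unfolding Lnorm_def powr_powr by (simp add: integral_nonneg)

lemma Lnorm_eq_0: "(\<And>x. f x = 0) \<Longrightarrow> Lnorm r \<Omega> f = 0"
  by (simp add: Lnorm_def)

lemma Lnorm_le_of_integral_le:
  assumes "r > 0" "(\<integral>x. norm (f x) powr r \<partial>lebesgue_on \<Omega>) \<le> B"
  shows "Lnorm r \<Omega> f \<le> B powr (1 / r)"
  unfolding Lnorm_def using assms by (intro powr_mono2) (auto simp: integral_nonneg)

lemma Lnorm_less_of_integral_less:
  assumes "r > 0" "(\<integral>x. norm (f x) powr r \<partial>lebesgue_on \<Omega>) < B"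
  shows "Lnorm r \<Omega> f < B powr (1 / r)"
  unfolding Lnorm_def using assms by (intro powr_less_mono2) (auto simp: integral_nonneg)

locale finite_measure_domain =
  fixes \<Omega> :: "'n::euclidean_space set"
  assumes lmeasurable_domain: "\<Omega> \<in> lmeasurable"
begin

abbreviation M where "M \<equiv> lebesgue_on \<Omega>"

abbreviation vol where "vol \<equiv> measure M (space M)"

sublocale finite_measure M
  using lmeasurable_domain by (rule finite_measure_lebesgue_on)

lemma Lsp_iff: "f \<in> Lsp r \<Omega> \<longleftrightarrow> f \<in> borel_measurable M \<and> integrable M (\<lambda>x. norm (f x) powr r)"
  by (simp add: Lsp_def)

lemma integrable_of_le_one_plus_Lsp:
  fixes f :: "'n \<Rightarrow> 'b::{banach, second_countable_topology}"
  assumes "v \<in> Lsp p \<Omega>" "f \<in> borel_measurable M" "\<And>x. norm (f x) \<le> C * (1 + norm (v x) powr p)"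
  shows "integrable M f"
proof (rule Bochner_Integration.integrable_bound)
  show "integrable M (\<lambda>x. C * (1 + norm (v x) powr p))"
    using assms(1) by (simp add: Lsp_iff)
  show "AE x in M. norm (f x) \<le> norm (C * (1 + norm (v x) powr p))"
    using assms(3) by (intro AE_I2) (smt (verit) norm_ge_zero real_norm_def)
qed fact

lemma Lsp_diff:
  assumes "w \<in> Lsp p \<Omega>" "v \<in> Lsp p \<Omega>" "p \<ge> 0"
  shows "(\<lambda>x. w x - v x) \<in> Lsp p \<Omega>"
  unfolding Lsp_iff
proof
  have [measurable]: "w \<in> borel_measurable M" "v \<in> borel_measurable M"
    using assms by (simp_all add: Lsp_iff)
  show meas: "(\<lambda>x. w x - v x) \<in> borel_measurable M" by measurable
  have pt: "norm (y - z) powr p \<le> 2 powr p * (norm y powr p + norm z powr p)" for y z :: complex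
  proof -
    have "norm (y - z) powr p \<le> (2 * max (norm y) (norm z)) powr p"
      using norm_triangle_ineq4[of y z] assms(3) by (intro powr_mono2) auto
    also have "\<dots> \<le> 2 powr p * (norm y powr p + norm z powr p)"
      by (simp add: powr_mult max_def)
    finally show ?thesis .
  qed
  show "integrable M (\<lambda>x. norm (w x - v x) powr p)"
  proof (rule Bochner_Integration.integrable_bound)
    show "integrable M (\<lambda>x. 2 powr p * (norm (w x) powr p + norm (v x) powr p))"
      using assms by (simp add: Lsp_iff)
    show "AE x in M. norm (norm (w x - v x) powr p) \<le> norm (2 powr p * (norm (w x) powr p + norm (v x) powr p))"
      using pt by (intro AE_I2) simp
  qed (use meas in measurable)
qed

lemma integral_norm_powr_le_Lnorm:
  assumes u: "u \<in> Lsp p \<Omega>" and "0 < q" "q \<le> p"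
  shows "integrable M (\<lambda>x. norm (u x) powr q)"
    and "(\<integral>x. norm (u x) powr q \<partial>M) \<le> (vol + 1) * Lnorm p \<Omega> u powr q"
proof -
  have "u \<in> borel_measurable M" and int: "integrable M (\<lambda>x. norm (u x) powr p)"
    using u by (simp_all add: Lsp_iff)
  then have meas: "(\<lambda>x. norm (u x)) \<in> borel_measurable M" by measurable
  show "integrable M (\<lambda>x. norm (u x) powr q)"
    using integrable_powr_smaller_exponent[OF meas _ int] assms by simp
  have "(\<integral>x. norm (u x) powr q \<partial>M) \<le> (vol + 1) * (\<integral>x. norm (u x) powr p \<partial>M) powr (q / p)"
    using integral_powr_le_integral_powr[OF meas _ int] assms by simp
  also have "(\<integral>x. norm (u x) powr p \<partial>M) powr (q / p) = Lnorm p \<Omega> u powr q"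
    using assms by (simp add: Lnorm_powr[symmetric] powr_powr)
  finally show "(\<integral>x. norm (u x) powr q \<partial>M) \<le> (vol + 1) * Lnorm p \<Omega> u powr q" .
qed

lemma integral_Holder_Lnorm:
  assumes u: "u \<in> Lsp p \<Omega>" and v: "v \<in> Lsp p \<Omega>" and q: "0 < q" "q < p" and e: "0 < e" "e \<le> p - q"
  shows "integrable M (\<lambda>x. norm (u x) powr q * norm (v x) powr e)"
    and "(\<integral>x. norm (u x) powr q * norm (v x) powr e \<partial>M)
      \<le> Lnorm p \<Omega> u powr q * (\<integral>x. norm (v x) powr (e * (p / (p - q))) \<partial>M) powr ((p - q) / p)"
proof -
  have [measurable]: "u \<in> borel_measurable M" "v \<in> borel_measurable M"
    and ui: "integrable M (\<lambda>x. norm (u x) powr p)" and vi: "integrable M (\<lambda>x. norm (v x) powr p)"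
    using u v by (simp_all add: Lsp_iff)
  define r where "r = p / q"
  define s where "s = p / (p - q)"
  have "r > 1" "s > 1" "1/r + 1/s = 1" using q by (auto simp: r_def s_def field_simps)
  have "e * s \<le> (p - q) * s" using e q \<open>s > 1\<close> by (intro mult_right_mono) auto
  then have "e * s \<le> p" using q by (simp add: s_def)
  have fr: "(norm (u x) powr q) powr r = norm (u x) powr p" for x using q by (simp add: powr_powr r_def)
  have gs: "(norm (v x) powr e) powr s = norm (v x) powr (e * s)" for x by (simp add: powr_powr)
  have gi: "integrable M (\<lambda>x. norm (v x) powr (e * s))"
    using integrable_powr_smaller_exponent[of "\<lambda>x. norm (v x)", OF _ _ vi] e \<open>s > 1\<close> \<open>e * s \<le> p\<close> by simp
  note Holder = Holder_inequality[of "\<lambda>x. norm (u x) powr q" M "\<lambda>x. norm (v x) powr e" r s,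
      OF _ _ _ _ \<open>r > 1\<close> \<open>s > 1\<close> \<open>1/r + 1/s = 1\<close>, unfolded fr gs]
  show "integrable M (\<lambda>x. norm (u x) powr q * norm (v x) powr e)"
    using Holder(1) ui gi by simp
  have "(\<integral>x. norm (u x) powr p \<partial>M) powr (1/r) = Lnorm p \<Omega> u powr q"
    using q by (simp add: Lnorm_powr[symmetric] powr_powr r_def)
  then show "(\<integral>x. norm (u x) powr q * norm (v x) powr e \<partial>M)
      \<le> Lnorm p \<Omega> u powr q * (\<integral>x. norm (v x) powr (e * (p / (p - q))) \<partial>M) powr ((p - q) / p)"
    using Holder(2) ui gi by (simp add: s_def)
qed

end

section \<open>The Nemytskii operator\<close>

locale nemytskii = finite_measure_domain +
  fixes a p :: real
  assumes a_pos: "a > 0" and p_eq: "p = 2 * (a + 1)"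
begin

lemma p_gt_2: "p > 2"
  using a_pos p_eq by simp

lemma Gop_Lsp_2:
  assumes "\<alpha> \<le> a" "v \<in> Lsp p \<Omega>"
  shows "Gop \<alpha> v \<in> Lsp 2 \<Omega>"
proof -
  have [measurable]: "v \<in> borel_measurable M" using assms by (simp add: Lsp_iff)
  have "integrable M (\<lambda>x. norm (gnl \<alpha> (v x)) powr 2)"
    using norm_gnl_powr_two_le[OF a_pos assms(1)]
    by (intro integrable_of_le_one_plus_Lsp[OF assms(2), where C = 1]) (auto simp: p_eq)
  then show ?thesis by (simp add: Lsp_iff Gop_def)
qed

lemma integral_Lop_sq_le:
  assumes "\<alpha> \<le> a" "v \<in> Lsp p \<Omega>"
  obtains K where "K \<ge> 0" "\<And>u. u \<in> Lsp p \<Omega> \<Longrightarrow> integrable M (\<lambda>x. norm (Lop \<alpha> v u x) powr 2)"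
    "\<And>u. u \<in> Lsp p \<Omega> \<Longrightarrow> (\<integral>x. norm (Lop \<alpha> v u x) powr 2 \<partial>M) \<le> K * Lnorm p \<Omega> u powr 2"
proof (cases "\<alpha> > 0")
  case True
  have [measurable]: "v \<in> borel_measurable M" using assms by (simp add: Lsp_iff)
  define K where "K = (1 + \<alpha>)^2 * (\<integral>x. norm (v x) powr (2 * \<alpha> * (p / (p - 2))) \<partial>M) powr ((p - 2) / p)"
  show ?thesis
  proof
    show "K \<ge> 0" by (simp add: K_def)
    fix u assume u: "u \<in> Lsp p \<Omega>"
    then have [measurable]: "u \<in> borel_measurable M" by (simp add: Lsp_iff)
    note Holder = integral_Holder_Lnorm[OF u assms(2), of 2 "2 * \<alpha>"]
    have bound_int: "integrable M (\<lambda>x. (1 + \<alpha>)^2 * (norm (u x) powr 2 * norm (v x) powr (2 * \<alpha>)))"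
      using Holder(1) True assms(1) p_eq by simp
    show int: "integrable M (\<lambda>x. norm (Lop \<alpha> v u x) powr 2)"
      using bound_int norm_Hnl_powr_two_le[OF True]
      by (intro Bochner_Integration.integrable_bound[OF bound_int]) (auto simp: Lop_def)
    have "(\<integral>x. norm (Lop \<alpha> v u x) powr 2 \<partial>M)
        \<le> (\<integral>x. (1 + \<alpha>)^2 * (norm (u x) powr 2 * norm (v x) powr (2 * \<alpha>)) \<partial>M)"
      using bound_int norm_Hnl_powr_two_le[OF True] by (intro integral_mono') (auto simp: Lop_def)
    also have "\<dots> \<le> K * Lnorm p \<Omega> u powr 2"
      using mult_left_mono[OF Holder(2), of "(1 + \<alpha>)^2"] True assms(1) p_eq by (simp add: K_def mult_ac)
    finally show "(\<integral>x. norm (Lop \<alpha> v u x) powr 2 \<partial>M) \<le> K * Lnorm p \<Omega> u powr 2" .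
  qed
next
  case False
  then have "Lop \<alpha> v u = u" for u by (simp add: Lop_def Hnl_def fun_eq_iff)
  then show ?thesis
    using that[of "vol + 1"] integral_norm_powr_le_Lnorm[of _ p 2] p_gt_2 by simp
qed

lemma Lop_bounded_real_linear:
  assumes "\<alpha> \<le> a" "v \<in> Lsp p \<Omega>"
  shows "bounded_real_linear_Lpq p 2 \<Omega> (Lop \<alpha> v)"
proof -
  obtain K where "K \<ge> 0" and int: "\<And>u. u \<in> Lsp p \<Omega> \<Longrightarrow> integrable M (\<lambda>x. norm (Lop \<alpha> v u x) powr 2)"
    and le: "\<And>u. u \<in> Lsp p \<Omega> \<Longrightarrow> (\<integral>x. norm (Lop \<alpha> v u x) powr 2 \<partial>M) \<le> K * Lnorm p \<Omega> u powr 2"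
    using integral_Lop_sq_le[OF assms] by blast
  have [measurable]: "v \<in> borel_measurable M" using assms by (simp add: Lsp_iff)
  have "Lnorm 2 \<Omega> (Lop \<alpha> v u) \<le> sqrt K * Lnorm p \<Omega> u" if "u \<in> Lsp p \<Omega>" for u
  proof -
    have "Lnorm 2 \<Omega> (Lop \<alpha> v u) \<le> (K * Lnorm p \<Omega> u powr 2) powr (1 / 2)"
      using le[OF that] by (intro Lnorm_le_of_integral_le) auto
    also have "\<dots> = sqrt K * Lnorm p \<Omega> u"
      using \<open>K \<ge> 0\<close> Lnorm_nonneg[of p \<Omega> u]
      by (simp add: powr_mult powr_powr powr_half_sqrt)
    finally show ?thesis .
  qed
  moreover have "Lop \<alpha> v u \<in> Lsp 2 \<Omega>" if "u \<in> Lsp p \<Omega>" for u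
  proof -
    have [measurable]: "u \<in> borel_measurable M" using that by (simp add: Lsp_iff)
    show ?thesis using int[OF that] by (simp add: Lsp_iff Lop_def)
  qed
  ultimately show ?thesis
    unfolding bounded_real_linear_Lpq_def
    by (auto intro!: Lnorm_eq_0 simp: Lop_def Hnl_add Hnl_scale)
qed

lemma integral_gnl_rem_sq_le:
  assumes "0 < \<alpha>" "\<alpha> \<le> a" "v \<in> Lsp p \<Omega>"
  obtains C where "C \<ge> 0" "\<And>h. h \<in> Lsp p \<Omega> \<Longrightarrow> Lnorm p \<Omega> h \<le> 1 \<Longrightarrow>
      (\<integral>x. norm (gnl_rem \<alpha> (v x) (h x)) powr 2 \<partial>M) \<le> C * Lnorm p \<Omega> h powr (2 + 2 * min \<alpha> 1)"
proof -
  obtain R where "R \<ge> 0" and R: "\<And>v h. norm (gnl_rem \<alpha> v h)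
      \<le> R * (norm h powr (\<alpha> + 1) + (if \<alpha> > 1 then norm v powr (\<alpha> - 1) * norm h powr 2 else 0))"
    using norm_gnl_rem_le[OF assms(1)] by blast
  define K where "K = (if \<alpha> > 1 then (\<integral>x. norm (v x) powr ((2 * \<alpha> - 2) * (p / (p - 4))) \<partial>M) powr ((p - 4) / p) else 0)"
  have "K \<ge> 0" by (simp add: K_def)
  show ?thesis
  proof
    show "2 * R^2 * (vol + 1 + K) \<ge> 0" using \<open>K \<ge> 0\<close> by simp
    fix h assume h: "h \<in> Lsp p \<Omega>" "Lnorm p \<Omega> h \<le> 1"
    define N where "N = Lnorm p \<Omega> h"
    have "N \<ge> 0" by (simp add: N_def Lnorm_nonneg)
    define Y where "Y = (\<lambda>x. if \<alpha> > 1 then norm (h x) powr 4 * norm (v x) powr (2 * \<alpha> - 2) else 0)"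
    have int_h: "integrable M (\<lambda>x. norm (h x) powr (2 * \<alpha> + 2))"
      and le_h: "(\<integral>x. norm (h x) powr (2 * \<alpha> + 2) \<partial>M) \<le> (vol + 1) * N powr (2 * \<alpha> + 2)"
      using integral_norm_powr_le_Lnorm[OF h(1), of "2 * \<alpha> + 2"] assms p_eq by (auto simp: N_def)
    have "integrable M Y \<and> (\<integral>x. Y x \<partial>M) \<le> K * N powr 4"
    proof (cases "\<alpha> > 1")
      case True
      then show ?thesis
        using integral_Holder_Lnorm[OF h(1) assms(3), of 4 "2 * \<alpha> - 2"] assms(2) p_eq
        unfolding Y_def K_def N_def by (simp add: mult.commute)
    qed (simp add: Y_def K_def)
    then have int_Y: "integrable M Y" and le_Y: "(\<integral>x. Y x \<partial>M) \<le> K * N powr 4" by auto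
    have "norm (gnl_rem \<alpha> (v x) (h x)) powr 2 \<le> 2 * R^2 * (norm (h x) powr (2 * \<alpha> + 2) + Y x)" for x
    proof -
      have "norm (gnl_rem \<alpha> (v x) (h x))^2 \<le> 2 * ((R * norm (h x) powr (\<alpha> + 1))^2
          + (R * (if \<alpha> > 1 then norm (v x) powr (\<alpha> - 1) * norm (h x) powr 2 else 0))^2)"
        using R[of "v x" "h x"] \<open>R \<ge> 0\<close> by (intro power2_le_of_abs_le_sum) (auto simp: algebra_simps)
      then show ?thesis
        by (cases "\<alpha> > 1") (simp_all add: Y_def norm_powr_two power_mult_distrib powr_power2 algebra_simps)
    qed
    then have "(\<integral>x. norm (gnl_rem \<alpha> (v x) (h x)) powr 2 \<partial>M)
        \<le> (\<integral>x. 2 * R^2 * (norm (h x) powr (2 * \<alpha> + 2) + Y x) \<partial>M)"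
      using int_h int_Y by (intro integral_mono') (auto simp: Y_def)
    also have "\<dots> = 2 * R^2 * ((\<integral>x. norm (h x) powr (2 * \<alpha> + 2) \<partial>M) + (\<integral>x. Y x \<partial>M))"
      using int_h int_Y by simp
    also have "\<dots> \<le> 2 * R^2 * ((vol + 1) * N powr (2 * \<alpha> + 2) + K * N powr 4)"
      using le_h le_Y by (intro mult_left_mono add_mono) auto
    also have "\<dots> \<le> 2 * R^2 * ((vol + 1 + K) * N powr (2 + 2 * min \<alpha> 1))"
    proof -
      have "N powr (2 * \<alpha> + 2) \<le> N powr (2 + 2 * min \<alpha> 1)"
        using \<open>N \<ge> 0\<close> h(2) by (intro powr_mono') (auto simp: N_def)
      moreover have "K * N powr 4 \<le> K * N powr (2 + 2 * min \<alpha> 1)"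
        by (cases "\<alpha> > 1") (simp_all add: K_def)
      ultimately have "(vol + 1) * N powr (2 * \<alpha> + 2) + K * N powr 4 \<le> (vol + 1 + K) * N powr (2 + 2 * min \<alpha> 1)"
        by (simp add: distrib_right add_mono mult_left_mono)
      then show ?thesis by (intro mult_left_mono) auto
    qed
    finally show "(\<integral>x. norm (gnl_rem \<alpha> (v x) (h x)) powr 2 \<partial>M)
        \<le> 2 * R^2 * (vol + 1 + K) * Lnorm p \<Omega> h powr (2 + 2 * min \<alpha> 1)"
      by (simp add: N_def mult.assoc)
  qed
qed

lemma Gop_has_Frechet_deriv:
  assumes "\<alpha> \<le> a" "v \<in> Lsp p \<Omega>"
  shows "has_Frechet_deriv_Lpq p 2 \<Omega> (Gop \<alpha>) v (Lop \<alpha> v)"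
  unfolding has_Frechet_deriv_Lpq_def
proof (intro conjI Lop_bounded_real_linear[OF assms] allI impI)
  fix \<epsilon> :: real assume "\<epsilon> > 0"
  have rem: "Gop \<alpha> (\<lambda>y. v y + h y) x - Gop \<alpha> v x - Lop \<alpha> v h x = gnl_rem \<alpha> (v x) (h x)" for h x
    by (simp add: Gop_def Lop_def gnl_rem_def)
  have "\<exists>\<delta>>0. \<forall>h\<in>Lsp p \<Omega>. Lnorm p \<Omega> h < \<delta> \<longrightarrow>
      Lnorm 2 \<Omega> (\<lambda>x. gnl_rem \<alpha> (v x) (h x)) \<le> \<epsilon> * Lnorm p \<Omega> h"
  proof (cases "\<alpha> > 0")
    case False
    then have "gnl_rem \<alpha> z u = 0" for z u by (simp add: gnl_rem_def gnl_def Hnl_def)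
    then show ?thesis
      using \<open>\<epsilon> > 0\<close> Lnorm_nonneg[of p \<Omega>] by (intro exI[of _ 1]) (simp add: Lnorm_eq_0)
  next
    case True
    obtain C where "C \<ge> 0" and C: "\<And>h. h \<in> Lsp p \<Omega> \<Longrightarrow> Lnorm p \<Omega> h \<le> 1 \<Longrightarrow>
        (\<integral>x. norm (gnl_rem \<alpha> (v x) (h x)) powr 2 \<partial>M) \<le> C * Lnorm p \<Omega> h powr (2 + 2 * min \<alpha> 1)"
      using integral_gnl_rem_sq_le[OF True assms] by blast
    define \<gamma> where "\<gamma> = min \<alpha> 1"
    have "\<gamma> > 0" using True by (simp add: \<gamma>_def)
    have "sqrt C + 1 > 0" using \<open>C \<ge> 0\<close> by (simp add: add_nonneg_pos)
    define \<delta> where "\<delta> = min 1 ((\<epsilon> / (sqrt C + 1)) powr (1 / \<gamma>))"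
    show ?thesis
    proof (intro exI[of _ \<delta>] conjI ballI impI)
      show "\<delta> > 0" using \<open>\<epsilon> > 0\<close> \<open>sqrt C + 1 > 0\<close> by (simp add: \<delta>_def)
      fix h assume h: "h \<in> Lsp p \<Omega>" "Lnorm p \<Omega> h < \<delta>"
      define N where "N = Lnorm p \<Omega> h"
      have "N \<ge> 0" by (simp add: N_def Lnorm_nonneg)
      have "N powr \<gamma> < ((\<epsilon> / (sqrt C + 1)) powr (1 / \<gamma>)) powr \<gamma>"
        using h(2) \<open>N \<ge> 0\<close> \<open>\<gamma> > 0\<close> by (intro powr_less_mono2) (auto simp: N_def \<delta>_def)
      also have "\<dots> = \<epsilon> / (sqrt C + 1)"
        using \<open>\<gamma> > 0\<close> \<open>\<epsilon> > 0\<close> \<open>sqrt C + 1 > 0\<close> by (simp add: powr_powr)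
      finally have "(sqrt C + 1) * N powr \<gamma> < \<epsilon>"
        using \<open>sqrt C + 1 > 0\<close> by (simp add: field_simps)
      then have "sqrt C * N powr \<gamma> \<le> \<epsilon>"
        by (simp add: distrib_right) (smt (verit) powr_ge_zero)
      have "Lnorm 2 \<Omega> (\<lambda>x. gnl_rem \<alpha> (v x) (h x)) \<le> (C * N powr (2 + 2 * \<gamma>)) powr (1 / 2)"
        using C[OF h(1)] h(2) by (intro Lnorm_le_of_integral_le) (auto simp: N_def \<gamma>_def \<delta>_def)
      also have "\<dots> = sqrt C * N powr \<gamma> * N"
        using \<open>C \<ge> 0\<close> \<open>N \<ge> 0\<close>
        by (simp add: powr_mult powr_powr powr_half_sqrt add_divide_distrib powr_add algebra_simps)
      also have "\<dots> \<le> \<epsilon> * N"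
        using \<open>sqrt C * N powr \<gamma> \<le> \<epsilon>\<close> \<open>N \<ge> 0\<close> by (rule mult_right_mono)
      finally show "Lnorm 2 \<Omega> (\<lambda>x. gnl_rem \<alpha> (v x) (h x)) \<le> \<epsilon> * Lnorm p \<Omega> h"
        by (simp add: N_def)
    qed
  qed
  then show "\<exists>\<delta>>0. \<forall>h\<in>Lsp p \<Omega>. Lnorm p \<Omega> h < \<delta> \<longrightarrow>
      Lnorm 2 \<Omega> (\<lambda>x. Gop \<alpha> (\<lambda>y. v y + h y) x - Gop \<alpha> v x - Lop \<alpha> v h x) \<le> \<epsilon> * Lnorm p \<Omega> h"
    by (simp add: rem)
qed

lemma integral_increment_powers_le:
  assumes "v \<in> Lsp p \<Omega>"
  obtains K where "K \<ge> 0"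
    "\<And>d. d \<in> Lsp p \<Omega> \<Longrightarrow>
      integrable M (\<lambda>x. norm (d x) powr 2 + norm (d x) powr 2 * norm (v x) powr (2 * a) + norm (d x) powr p)"
    "\<And>d. d \<in> Lsp p \<Omega> \<Longrightarrow> Lnorm p \<Omega> d \<le> 1 \<Longrightarrow>
      (\<integral>x. norm (d x) powr 2 + norm (d x) powr 2 * norm (v x) powr (2 * a) + norm (d x) powr p \<partial>M)
        \<le> K * Lnorm p \<Omega> d"
proof
  define Kv where "Kv = (\<integral>x. norm (v x) powr (2 * a * (p / (p - 2))) \<partial>M) powr ((p - 2) / p)"
  show "vol + 2 + Kv \<ge> 0" by (simp add: Kv_def)
  fix d assume d: "d \<in> Lsp p \<Omega>"
  have "2 * a = p - 2" using p_eq by simp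
  note Holder = integral_Holder_Lnorm[OF d assms, of 2 "2 * a", unfolded this]
  show "integrable M (\<lambda>x. norm (d x) powr 2 + norm (d x) powr 2 * norm (v x) powr (2 * a) + norm (d x) powr p)"
    using integral_norm_powr_le_Lnorm(1)[OF d, of 2] Holder(1) d p_gt_2 by (simp add: Lsp_iff p_eq)
  assume "Lnorm p \<Omega> d \<le> 1"
  define N where "N = Lnorm p \<Omega> d"
  have "N \<ge> 0" "N \<le> 1" using \<open>Lnorm p \<Omega> d \<le> 1\<close> by (simp_all add: N_def Lnorm_nonneg)
  have "N powr p \<le> N powr 2" "N powr 2 \<le> N powr 1"
    using \<open>N \<ge> 0\<close> \<open>N \<le> 1\<close> p_gt_2 by (intro powr_mono'; simp)+
  have "(\<integral>x. norm (d x) powr 2 + norm (d x) powr 2 * norm (v x) powr (2 * a) + norm (d x) powr p \<partial>M)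
      = (\<integral>x. norm (d x) powr 2 \<partial>M) + (\<integral>x. norm (d x) powr 2 * norm (v x) powr (2 * a) \<partial>M)
        + (\<integral>x. norm (d x) powr p \<partial>M)"
    using integral_norm_powr_le_Lnorm(1)[OF d, of 2] Holder(1) d p_gt_2 by (simp add: Lsp_iff p_eq)
  also have "\<dots> \<le> (vol + 1) * N powr 2 + N powr 2 * Kv + N powr p"
    using integral_norm_powr_le_Lnorm(2)[OF d, of 2] Holder(2) d p_gt_2
    by (intro add_mono) (simp_all add: N_def Kv_def Lnorm_powr p_eq)
  also have "\<dots> \<le> (vol + 2 + Kv) * N powr 2"
    using \<open>N powr p \<le> N powr 2\<close> by (simp add: algebra_simps)
  also have "\<dots> \<le> (vol + 2 + Kv) * N"
    using \<open>N powr 2 \<le> N powr 1\<close> \<open>N \<ge> 0\<close> by (intro mult_left_mono) (auto simp: Kv_def)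
  finally show "(\<integral>x. norm (d x) powr 2 + norm (d x) powr 2 * norm (v x) powr (2 * a) + norm (d x) powr p \<partial>M)
      \<le> (vol + 2 + Kv) * Lnorm p \<Omega> d"
    by (simp add: N_def)
qed

lemma integral_Gop_diff_sq_le:
  assumes "v \<in> Lsp p \<Omega>"
  obtains K where "K \<ge> 0"
    "\<And>\<beta> w. \<beta> \<le> a \<Longrightarrow> w \<in> Lsp p \<Omega> \<Longrightarrow>
      integrable M (\<lambda>x. norm (Gop \<beta> w x - Gop \<beta> v x) powr 2)"
    "\<And>\<beta> w. \<beta> \<le> a \<Longrightarrow> w \<in> Lsp p \<Omega> \<Longrightarrow> Lnorm p \<Omega> (\<lambda>x. w x - v x) \<le> 1 \<Longrightarrow>
      (\<integral>x. norm (Gop \<beta> w x - Gop \<beta> v x) powr 2 \<partial>M) \<le> K * Lnorm p \<Omega> (\<lambda>x. w x - v x)"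
proof -
  obtain L where "L \<ge> 0" and L: "\<And>\<beta> v w. \<beta> \<le> a \<Longrightarrow> norm (gnl \<beta> w - gnl \<beta> v) powr 2
      \<le> L * (norm (w - v) powr 2 + norm (w - v) powr 2 * norm v powr (2 * a) + norm (w - v) powr (2 * (a + 1)))"
    using norm_gnl_diff_powr_two_le[OF a_pos] by blast
  obtain K where "K \<ge> 0" and int_U: "\<And>d. d \<in> Lsp p \<Omega> \<Longrightarrow>
      integrable M (\<lambda>x. norm (d x) powr 2 + norm (d x) powr 2 * norm (v x) powr (2 * a) + norm (d x) powr p)"
    and le_U: "\<And>d. d \<in> Lsp p \<Omega> \<Longrightarrow> Lnorm p \<Omega> d \<le> 1 \<Longrightarrow>
      (\<integral>x. norm (d x) powr 2 + norm (d x) powr 2 * norm (v x) powr (2 * a) + norm (d x) powr p \<partial>M)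
        \<le> K * Lnorm p \<Omega> d"
    using integral_increment_powers_le[OF assms] by blast
  have [measurable]: "v \<in> borel_measurable M" using assms by (simp add: Lsp_iff)
  show ?thesis
  proof
    show "L * K \<ge> 0" using \<open>L \<ge> 0\<close> \<open>K \<ge> 0\<close> by simp
    fix \<beta> w assume "\<beta> \<le> a" and w: "w \<in> Lsp p \<Omega>"
    then have [measurable]: "w \<in> borel_measurable M" by (simp add: Lsp_iff)
    define d where "d = (\<lambda>x. w x - v x)"
    have d: "d \<in> Lsp p \<Omega>" using Lsp_diff[OF w assms] p_gt_2 by (simp add: d_def)
    define U where "U = (\<lambda>x. norm (d x) powr 2 + norm (d x) powr 2 * norm (v x) powr (2 * a) + norm (d x) powr p)"
    have pointwise: "norm (Gop \<beta> w x - Gop \<beta> v x) powr 2 \<le> L * U x" for x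
      using L[OF \<open>\<beta> \<le> a\<close>, where v = "v x" and w = "w x"] by (simp add: Gop_def U_def d_def p_eq)
    have int_LU: "integrable M (\<lambda>x. L * U x)" using int_U[OF d] by (simp add: U_def)
    show "integrable M (\<lambda>x. norm (Gop \<beta> w x - Gop \<beta> v x) powr 2)"
      using pointwise
      by (intro Bochner_Integration.integrable_bound[OF int_LU] AE_I2)
        (auto simp: Gop_def intro: order_trans[OF _ abs_ge_self])
    assume "Lnorm p \<Omega> (\<lambda>x. w x - v x) \<le> 1"
    have "(\<integral>x. norm (Gop \<beta> w x - Gop \<beta> v x) powr 2 \<partial>M) \<le> (\<integral>x. L * U x \<partial>M)"
      using int_LU pointwise \<open>L \<ge> 0\<close> by (intro integral_mono') (auto simp: U_def)
    also have "\<dots> \<le> L * (K * Lnorm p \<Omega> d)"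
      using le_U[OF d] \<open>Lnorm p \<Omega> (\<lambda>x. w x - v x) \<le> 1\<close> \<open>L \<ge> 0\<close>
      by (simp add: U_def d_def mult_left_mono)
    finally show "(\<integral>x. norm (Gop \<beta> w x - Gop \<beta> v x) powr 2 \<partial>M) \<le> L * K * Lnorm p \<Omega> (\<lambda>x. w x - v x)"
      by (simp add: d_def mult.assoc)
  qed
qed

lemma norm_gnl_exponent_diff_le:
  assumes "\<beta> \<le> a" "\<alpha> \<le> a"
  shows "norm (gnl \<beta> z - gnl \<alpha> z) powr 2 \<le> 4 * (1 + norm z powr p)"
  using norm_add_powr_two_le[of "gnl \<beta> z" "- gnl \<alpha> z"]
    norm_gnl_powr_two_le[OF a_pos assms(1), of z] norm_gnl_powr_two_le[OF a_pos assms(2), of z]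
  by (simp add: p_eq)

lemma integral_gnl_exponent_diff_tendsto:
  assumes "\<alpha> \<le> a" "v \<in> Lsp p \<Omega>"
  shows "((\<lambda>\<beta>. \<integral>x. norm (gnl \<beta> (v x) - gnl \<alpha> (v x)) powr 2 \<partial>M) \<longlongrightarrow> 0) (at \<alpha> within {..a})"
  unfolding tendsto_at_iff_sequentially comp_def
proof (intro allI impI)
  have [measurable]: "v \<in> borel_measurable M" using assms by (simp add: Lsp_iff)
  fix X :: "nat \<Rightarrow> real" assume X: "\<forall>i. X i \<in> {..a} - {\<alpha>}" "X \<longlonglongrightarrow> \<alpha>"
  have "(\<lambda>i. \<integral>x. norm (gnl (X i) (v x) - gnl \<alpha> (v x)) powr 2 \<partial>M) \<longlonglongrightarrow> (\<integral>x. 0 \<partial>M)"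
  proof (rule integral_dominated_convergence[where w = "\<lambda>x. 4 * (1 + norm (v x) powr p)"])
    show "integrable M (\<lambda>x. 4 * (1 + norm (v x) powr p))"
      using assms(2) by (simp add: Lsp_iff)
    show "AE x in M. (\<lambda>i. norm (gnl (X i) (v x) - gnl \<alpha> (v x)) powr 2) \<longlonglongrightarrow> 0"
      using gnl_tendsto_exponent[OF X(2)] by (intro AE_I2 tendsto_eq_intros) auto
    show "AE x in M. norm (norm (gnl (X i) (v x) - gnl \<alpha> (v x)) powr 2) \<le> 4 * (1 + norm (v x) powr p)" for i
      using norm_gnl_exponent_diff_le[OF _ assms(1)] X(1) by (intro AE_I2) auto
  qed measurable
  then show "(\<lambda>i. \<integral>x. norm (gnl (X i) (v x) - gnl \<alpha> (v x)) powr 2 \<partial>M) \<longlonglongrightarrow> 0" by simp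
qed

lemma Gop_continuous:
  assumes "\<alpha> \<le> a" "v \<in> Lsp p \<Omega>" "\<epsilon> > 0"
  shows "\<exists>\<delta>>0. \<forall>\<beta>\<le>a. \<forall>w\<in>Lsp p \<Omega>. \<bar>\<beta> - \<alpha>\<bar> < \<delta> \<and> Lnorm p \<Omega> (\<lambda>x. w x - v x) < \<delta> \<longrightarrow>
      Lnorm 2 \<Omega> (\<lambda>x. Gop \<beta> w x - Gop \<alpha> v x) < \<epsilon>"
proof -
  have [measurable]: "v \<in> borel_measurable M" using assms by (simp add: Lsp_iff)
  obtain K where "K \<ge> 0"
    and int_w: "\<And>\<beta> w. \<beta> \<le> a \<Longrightarrow> w \<in> Lsp p \<Omega> \<Longrightarrow>
      integrable M (\<lambda>x. norm (Gop \<beta> w x - Gop \<beta> v x) powr 2)"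
    and le_w: "\<And>\<beta> w. \<beta> \<le> a \<Longrightarrow> w \<in> Lsp p \<Omega> \<Longrightarrow> Lnorm p \<Omega> (\<lambda>x. w x - v x) \<le> 1 \<Longrightarrow>
      (\<integral>x. norm (Gop \<beta> w x - Gop \<beta> v x) powr 2 \<partial>M) \<le> K * Lnorm p \<Omega> (\<lambda>x. w x - v x)"
    using integral_Gop_diff_sq_le[OF assms(2)] by blast
  define E where "E = (\<lambda>\<beta>. \<integral>x. norm (gnl \<beta> (v x) - gnl \<alpha> (v x)) powr 2 \<partial>M)"
  have "\<forall>\<^sub>F \<beta> in at \<alpha> within {..a}. E \<beta> < \<epsilon>^2 / 4"
    using order_tendstoD(2)[OF integral_gnl_exponent_diff_tendsto[OF assms(1,2)], of "\<epsilon>^2 / 4"] \<open>\<epsilon> > 0\<close>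
    unfolding E_def by simp
  then obtain \<delta>1 where "\<delta>1 > 0"
    and near_\<alpha>: "\<And>\<beta>. \<beta> \<in> {..a} \<Longrightarrow> \<beta> \<noteq> \<alpha> \<Longrightarrow> dist \<beta> \<alpha> < \<delta>1 \<Longrightarrow> E \<beta> < \<epsilon>^2 / 4"
    unfolding eventually_at by blast
  have \<delta>1: "E \<beta> < \<epsilon>^2 / 4" if "\<beta> \<le> a" "\<bar>\<beta> - \<alpha>\<bar> < \<delta>1" for \<beta>
    using near_\<alpha>[of \<beta>] that \<open>\<epsilon> > 0\<close> by (cases "\<beta> = \<alpha>") (auto simp: E_def dist_real_def)
  define \<delta> where "\<delta> = min \<delta>1 (min 1 (\<epsilon>^2 / (4 * K + 1)))"
  show ?thesis
  proof (intro exI[of _ \<delta>] conjI allI impI ballI)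
    show "\<delta> > 0" using \<open>\<delta>1 > 0\<close> \<open>\<epsilon> > 0\<close> \<open>K \<ge> 0\<close> by (simp add: \<delta>_def)
    fix \<beta> w assume "\<beta> \<le> a" "w \<in> Lsp p \<Omega>" and close: "\<bar>\<beta> - \<alpha>\<bar> < \<delta> \<and> Lnorm p \<Omega> (\<lambda>x. w x - v x) < \<delta>"
    define N where "N = Lnorm p \<Omega> (\<lambda>x. w x - v x)"
    have "N \<le> 1" "N < \<epsilon>^2 / (4 * K + 1)" "E \<beta> < \<epsilon>^2 / 4"
      using close \<delta>1[OF \<open>\<beta> \<le> a\<close>] by (simp_all add: N_def \<delta>_def)
    have int_E: "integrable M (\<lambda>x. norm (gnl \<beta> (v x) - gnl \<alpha> (v x)) powr 2)"
      using norm_gnl_exponent_diff_le[OF \<open>\<beta> \<le> a\<close> assms(1)]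
      by (intro integrable_of_le_one_plus_Lsp[OF assms(2), where C = 4]) auto
    have "norm (Gop \<beta> w x - Gop \<alpha> v x) powr 2
        \<le> 2 * (norm (Gop \<beta> w x - Gop \<beta> v x) powr 2 + norm (gnl \<beta> (v x) - gnl \<alpha> (v x)) powr 2)" for x
      using norm_add_powr_two_le[of "Gop \<beta> w x - Gop \<beta> v x" "gnl \<beta> (v x) - gnl \<alpha> (v x)"]
      by (simp add: Gop_def)
    then have "(\<integral>x. norm (Gop \<beta> w x - Gop \<alpha> v x) powr 2 \<partial>M)
        \<le> (\<integral>x. 2 * (norm (Gop \<beta> w x - Gop \<beta> v x) powr 2 + norm (gnl \<beta> (v x) - gnl \<alpha> (v x)) powr 2) \<partial>M)"
      using int_w[OF \<open>\<beta> \<le> a\<close> \<open>w \<in> Lsp p \<Omega>\<close>] int_E by (intro integral_mono') auto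
    also have "\<dots> = 2 * (\<integral>x. norm (Gop \<beta> w x - Gop \<beta> v x) powr 2 \<partial>M) + 2 * E \<beta>"
      using int_w[OF \<open>\<beta> \<le> a\<close> \<open>w \<in> Lsp p \<Omega>\<close>] int_E by (simp add: E_def)
    also have "\<dots> < 2 * (K * (\<epsilon>^2 / (4 * K + 1))) + 2 * (\<epsilon>^2 / 4)"
    proof (rule add_le_less_mono)
      have "(\<integral>x. norm (Gop \<beta> w x - Gop \<beta> v x) powr 2 \<partial>M) \<le> K * N"
        using le_w[OF \<open>\<beta> \<le> a\<close> \<open>w \<in> Lsp p \<Omega>\<close>] \<open>N \<le> 1\<close> by (simp add: N_def)
      also have "\<dots> \<le> K * (\<epsilon>^2 / (4 * K + 1))"
        using \<open>N < \<epsilon>^2 / (4 * K + 1)\<close> \<open>K \<ge> 0\<close> by (intro mult_left_mono) auto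
      finally show "2 * (\<integral>x. norm (Gop \<beta> w x - Gop \<beta> v x) powr 2 \<partial>M) \<le> 2 * (K * (\<epsilon>^2 / (4 * K + 1)))"
        by simp
    qed (use \<open>E \<beta> < \<epsilon>^2 / 4\<close> in simp)
    also have "\<dots> \<le> \<epsilon>^2"
      using \<open>K \<ge> 0\<close> by (simp add: field_simps)
    finally have "Lnorm 2 \<Omega> (\<lambda>x. Gop \<beta> w x - Gop \<alpha> v x) < (\<epsilon>^2) powr (1 / 2)"
      by (intro Lnorm_less_of_integral_less) auto
    then show "Lnorm 2 \<Omega> (\<lambda>x. Gop \<beta> w x - Gop \<alpha> v x) < \<epsilon>"
      using \<open>\<epsilon> > 0\<close> by (simp add: powr_half_sqrt)
  qed
qed

end

theorem propositionA1:
  fixes \<Omega> :: "('n::euclidean_space) set" and a p :: real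
  assumes "open \<Omega>" and "bounded \<Omega>" and "a > 0" and "p = 2 * (a + 1)"
  shows "(\<forall>\<alpha>\<le>a. \<forall>v\<in>Lsp p \<Omega>. Gop \<alpha> v \<in> Lsp 2 \<Omega>)
    \<and> (\<forall>\<alpha>\<le>a. \<forall>v\<in>Lsp p \<Omega>. \<forall>\<epsilon>>0. \<exists>\<delta>>0. \<forall>\<beta>\<le>a. \<forall>w\<in>Lsp p \<Omega>.
          \<bar>\<beta> - \<alpha>\<bar> < \<delta> \<and> Lnorm p \<Omega> (\<lambda>x. w x - v x) < \<delta> \<longrightarrow>
          Lnorm 2 \<Omega> (\<lambda>x. Gop \<beta> w x - Gop \<alpha> v x) < \<epsilon>)
    \<and> (\<forall>\<alpha>\<le>a. \<forall>v\<in>Lsp p \<Omega>. \<exists>T. has_Frechet_deriv_Lpq p 2 \<Omega> (Gop \<alpha>) v T)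
    \<and> (\<forall>\<alpha><a. \<forall>v\<in>Lsp p \<Omega>. has_Frechet_deriv_Lpq p 2 \<Omega> (Gop \<alpha>) v (Lop \<alpha> v))"
proof -
  interpret nemytskii \<Omega> a p
    using assms by unfold_locales (auto intro: lmeasurable_open)
  show ?thesis
    using Gop_Lsp_2 Gop_continuous Gop_has_Frechet_deriv by (meson less_imp_le)
qed

end
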